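(* A uniform preorder $(A,R)$ is a discrete combinatory object (i.e. every relation $r\in R$ is single-valued) if and only if the generic predicate $\mathrm{id}_A\in\mathsf{fam}(A,R)(A)$ is discrete.
   Context: A uniform preorder is a pair $(A,R)$ with $A$ a set and $R\subseteq P(A\times A)$ such that $\mathrm{id}_A\in R$, $s\circ r\in R$ whenever $r,s\in R$, and $s\in R$ whenever $r\in R$ and $s\subseteq r$. $\mathsf{fam}(A,R)$ is the indexed preorder (pseudofunctor $\mathsf{Set}^{op}\to\mathsf{Ord}$) with $\mathsf{fam}(A,R)(I)=(A^I,\le)$, $\varphi\le\psi$ iff $\{(\varphi i,\psi i)\mid i\in I\}\in R$, and reindexing $f^*$ by precomposition. A predicate $\delta\in\mathcal{A}(I)$ of an indexed preorder $\mathcal{A}$ is discrete if for every surjection $e:K\to J$, function $f:K\to I$ and predicate $\varphi\in\mathcal{A}(J)$ with $e^*\varphi\le f^*\delta$, there exists a (necessarily unique) $g:J\to I$ with $g\circ e=f$. *)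

theory Defs
  imports "HOL-Library.FuncSet"
begin

definition uniform_preorder :: "'a set \<Rightarrow> ('a \<times> 'a) set set \<Rightarrow> bool" where
  "uniform_preorder A R \<longleftrightarrow>
     (\<forall>r\<in>R. r \<subseteq> A \<times> A) \<and>
     Id_on A \<in> R \<and>
     (\<forall>r\<in>R. \<forall>s\<in>R. r O s \<in> R) \<and>
     (\<forall>r\<in>R. \<forall>s. s \<subseteq> r \<longrightarrow> s \<in> R)"

definition discrete_combinatory_object :: "('a \<times> 'a) set set \<Rightarrow> bool" where
  "discrete_combinatory_object R \<longleftrightarrow> (\<forall>r\<in>R. single_valued r)"

definition fam_le :: "('a \<times> 'a) set set \<Rightarrow> 'i set \<Rightarrow> ('i \<Rightarrow> 'a) \<Rightarrow> ('i \<Rightarrow> 'a) \<Rightarrow> bool" where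
  "fam_le R I \<phi> \<psi> \<longleftrightarrow> {(\<phi> i, \<psi> i) | i. i \<in> I} \<in> R"

text \<open>Discrete predicate \<delta> in fam(A,R)(I), where the index sets K, J range over
subsets of the types 'k, 'j (given by the itself-arguments).  Reindexing is precomposition.\<close>
definition fam_discrete ::
  "'k itself \<Rightarrow> 'j itself \<Rightarrow> 'a set \<Rightarrow> ('a \<times> 'a) set set \<Rightarrow> 'i set \<Rightarrow> ('i \<Rightarrow> 'a) \<Rightarrow> bool" where
  "fam_discrete TK TJ A R I \<delta> \<longleftrightarrow>
     \<delta> \<in> I \<rightarrow> A \<and>
     (\<forall>(K::'k set) (J::'j set) e f \<phi>.
        e \<in> K \<rightarrow> J \<and> e ` K = J \<and> f \<in> K \<rightarrow> I \<and> \<phi> \<in> J \<rightarrow> A \<and>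
        fam_le R K (\<phi> \<circ> e) (\<delta> \<circ> f)
        \<longrightarrow> (\<exists>g. g \<in> J \<rightarrow> I \<and> (\<forall>k\<in>K. g (e k) = f k)))"

end

theory Submission
  imports Defs
begin

text \<open>If every relation of \<open>R\<close> is single-valued, then \<open>\<phi> \<circ> e \<le> f\<close> makes \<open>f\<close> a function
  of \<open>\<phi> \<circ> e\<close>, hence constant on the fibres of \<open>e\<close>, so \<open>f\<close> factors through the surjection \<open>e\<close>.
  Conversely, if \<open>(a, b), (a, c) \<in> r \<in> R\<close>, the constant family \<open>a\<close> on a point lies below
  the family \<open>b, c\<close> on two points reindexed along the unique surjection, and a factorisation
  forces \<open>b = c\<close>.\<close>

lemma fam_le_eq_on_fibres:
  assumes "discrete_combinatory_object R" "fam_le R K \<phi> \<psi>"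
    and "k \<in> K" "k' \<in> K" "\<phi> k = \<phi> k'"
  shows "\<psi> k = \<psi> k'"
proof -
  let ?r = "{(\<phi> i, \<psi> i) | i. i \<in> K}"
  have "?r \<in> R"
    using assms(2) unfolding fam_le_def .
  with assms(1) have "single_valued ?r"
    unfolding discrete_combinatory_object_def by (rule bspec)
  moreover have "(\<phi> k, \<psi> k) \<in> ?r" "(\<phi> k', \<psi> k') \<in> ?r"
    using assms(3,4) by blast+
  ultimately show ?thesis
    unfolding assms(5) by (rule single_valuedD)
qed

lemma factors_through_surjection_Pi:
  assumes "e ` K = J" "f \<in> K \<rightarrow> I"
    and "\<And>k k'. k \<in> K \<Longrightarrow> k' \<in> K \<Longrightarrow> e k = e k' \<Longrightarrow> f k = f k'"
  shows "\<exists>g. g \<in> J \<rightarrow> I \<and> (\<forall>k\<in>K. g (e k) = f k)"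
proof -
  obtain g where g: "\<forall>k. k \<in> K \<longrightarrow> f k = g (e k)"
    using function_factors_left_gen[of "\<lambda>k. k \<in> K" e f] assms(3) by blast
  have "g \<in> J \<rightarrow> I"
  proof
    fix j
    assume "j \<in> J"
    then obtain k where "k \<in> K" "j = e k"
      using assms(1) by blast
    then show "g j \<in> I"
      using assms(2) g by (metis funcset_mem)
  qed
  with g show ?thesis
    by auto
qed

lemma discrete_combinatory_object_imp_fam_discrete_id:
  assumes "discrete_combinatory_object R"
  shows "fam_discrete TK TJ A R A (\<lambda>x. x)"
  unfolding fam_discrete_def
proof (intro conjI allI impI funcsetI; (elim conjE)?)
  show "x \<in> A" if "x \<in> A" for x
    using that .
next
  fix K :: "'k set" and J :: "'j set" and e f \<phi>
  assume surj: "e ` K = J" and f: "f \<in> K \<rightarrow> A" and le: "fam_le R K (\<phi> \<circ> e) ((\<lambda>x. x) \<circ> f)"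
  have "f k = f k'" if "k \<in> K" "k' \<in> K" "e k = e k'" for k k'
    using fam_le_eq_on_fibres[OF assms le that(1,2)] that(3) by (simp only: comp_apply)
  then show "\<exists>g. g \<in> J \<rightarrow> A \<and> (\<forall>k\<in>K. g (e k) = f k)"
    by (rule factors_through_surjection_Pi[OF surj f])
qed

lemma fam_le_if_subset:
  assumes "uniform_preorder A R" "r \<in> R" "{(\<phi> i, \<psi> i) | i. i \<in> I} \<subseteq> r"
  shows "fam_le R I \<phi> \<psi>"
proof -
  have down_closed: "\<forall>r\<in>R. \<forall>s. s \<subseteq> r \<longrightarrow> s \<in> R"
    using assms(1) unfolding uniform_preorder_def by (elim conjE)
  show ?thesis
    unfolding fam_le_def by (rule down_closed[rule_format, OF assms(2,3)])
qed

lemma fam_discreteD: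
  fixes K :: "'k set" and J :: "'j set"
  assumes "fam_discrete TYPE('k) TYPE('j) A R I \<delta>"
    and "e \<in> K \<rightarrow> J" "e ` K = J" "f \<in> K \<rightarrow> I" "\<phi> \<in> J \<rightarrow> A"
    and "fam_le R K (\<phi> \<circ> e) (\<delta> \<circ> f)"
  shows "\<exists>g. g \<in> J \<rightarrow> I \<and> (\<forall>k\<in>K. g (e k) = f k)"
  using assms unfolding fam_discrete_def by (elim conjE allE impE) simp_all

lemma fam_discrete_id_imp_discrete_combinatory_object:
  fixes k\<^sub>0 k\<^sub>1 :: 'k
  assumes "uniform_preorder A R" "fam_discrete TYPE('k) TYPE('j) A R A (\<lambda>x. x)" "k\<^sub>0 \<noteq> k\<^sub>1"
  shows "discrete_combinatory_object R"
  unfolding discrete_combinatory_object_def single_valued_def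
proof (intro ballI allI impI)
  fix r a b c
  assume r: "r \<in> R" and ab: "(a, b) \<in> r" and ac: "(a, c) \<in> r"
  have "r \<subseteq> A \<times> A"
    using assms(1) r unfolding uniform_preorder_def by simp
  then have "a \<in> A" "b \<in> A" "c \<in> A"
    using ab ac by auto
  define j :: 'j where "j = undefined"
  define f where "f = (\<lambda>k. if k = k\<^sub>0 then b else c)"
  have le: "fam_le R {k\<^sub>0, k\<^sub>1} ((\<lambda>_. a) \<circ> (\<lambda>_. j)) ((\<lambda>x. x) \<circ> f)"
    by (rule fam_le_if_subset[OF assms(1) r]) (use ab ac in \<open>auto simp: f_def\<close>)
  have maps: "(\<lambda>_. j) \<in> {k\<^sub>0, k\<^sub>1} \<rightarrow> {j}" "(\<lambda>_. j) ` {k\<^sub>0, k\<^sub>1} = {j}"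
    "f \<in> {k\<^sub>0, k\<^sub>1} \<rightarrow> A" "(\<lambda>_. a) \<in> {j} \<rightarrow> A"
    using \<open>a \<in> A\<close> \<open>b \<in> A\<close> \<open>c \<in> A\<close> by (auto simp: f_def)
  obtain g where "\<forall>k\<in>{k\<^sub>0, k\<^sub>1}. g j = f k"
    using fam_discreteD[OF assms(2) maps le] by blast
  then show "b = c"
    using assms(3) by (auto simp: f_def)
qed

theorem proposition8p3:
  fixes A :: "'a set" and R :: "('a \<times> 'a) set set"
  assumes "uniform_preorder A R"
  shows "(discrete_combinatory_object R \<longrightarrow> fam_discrete TYPE('k) TYPE('j) A R A (\<lambda>x. x))
       \<and> (fam_discrete TYPE(nat) TYPE(nat) A R A (\<lambda>x. x) \<longrightarrow> discrete_combinatory_object R)"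
proof (intro conjI impI)
  show "fam_discrete TYPE('k) TYPE('j) A R A (\<lambda>x. x)" if "discrete_combinatory_object R"
    using that by (rule discrete_combinatory_object_imp_fam_discrete_id)
  show "discrete_combinatory_object R" if "fam_discrete TYPE(nat) TYPE(nat) A R A (\<lambda>x. x)"
    using fam_discrete_id_imp_discrete_combinatory_object[OF assms that, of 0 1] by simp
qed

end
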